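(* Let $V\subseteq\mathbb{R}^n$ be convex, $F\colon V\to\mathbb{R}^n$ globally Lipschitz, and define $\tilde F\colon V^N\to\mathbb{R}^{nN}$ by $\tilde F(u)=(F(u_1)^T,\dots,F(u_N)^T)^T$ for $u=(u_1^T,\dots,u_N^T)^T$, $u_i\in V$. Let $D=\operatorname{diag}(d_1,\dots,d_n)$ with $d_i>0$, and let $L\in\mathbb{R}^{N\times N}$ be a graph Laplacian: symmetric, with nonpositive off-diagonal entries, and $L\mathbf{1}=0$. Fix $1\le p\le\infty$ and a positive diagonal $n\times n$ matrix $Q$, and let $c=M_{p,Q}[F]$. Then for any two continuously differentiable solutions $u,v\colon[0,\infty)\to V^N$ of \[ \dot u(t)=\tilde F(u(t))-(L\otimes D)u(t), \] we have $\|u(t)-v(t)\|_{p,Q}\le e^{ct}\|u(0)-v(0)\|_{p,Q}$ for all $t\ge0$.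
   Context: On $\mathbb{R}^n$, $\|x\|_{p,Q}=\|Qx\|_p$; on $\mathbb{R}^{nN}$, $\|u\|_{p,Q}=\big\|(\|Qu_1\|_p,\dots,\|Qu_N\|_p)^T\big\|_p$. The logarithmic Lipschitz constant is $M_{p,Q}[F]=\lim_{h\to0^+}\sup_{x\neq y\in V}\frac1h\left(\frac{\|x-y+h(F(x)-F(y))\|_{p,Q}}{\|x-y\|_{p,Q}}-1\right)$. $\mathbf{1}=(1,\dots,1)^T$ and $\otimes$ is the Kronecker product. *)

theory Defs
  imports "HOL-Analysis.Analysis" "HOL-Library.Extended_Real"
begin

definition pnorm :: "ereal \<Rightarrow> real^'a \<Rightarrow> real" where
  "pnorm p x = (if p = \<infinity> then Max (range (\<lambda>i. \<bar>x $ i\<bar>))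
                else (\<Sum>i\<in>UNIV. \<bar>x $ i\<bar> powr real_of_ereal p) powr (1 / real_of_ereal p))"

definition normPQ :: "ereal \<Rightarrow> real^'n^'n \<Rightarrow> real^'n \<Rightarrow> real" where
  "normPQ p Q x = pnorm p (Q *v x)"

text \<open>Weighted norm on R^{nN}, u = (u_1,...,u_N) with u_k \<in> R^n.\<close>
definition normPQ_block :: "ereal \<Rightarrow> real^'n^'n \<Rightarrow> (real^'n)^'N \<Rightarrow> real" where
  "normPQ_block p Q u = pnorm p (\<chi> k. normPQ p Q (u $ k))"

definition logLip :: "ereal \<Rightarrow> real^'n^'n \<Rightarrow> (real^'n) set \<Rightarrow> (real^'n \<Rightarrow> real^'n) \<Rightarrow> real" where
  "logLip p Q V F = Lim (at_right 0)
     (\<lambda>h. SUP xy \<in> {(x, y). x \<in> V \<and> y \<in> V \<and> x \<noteq> y}.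
        (1 / h) * (normPQ p Q (fst xy - snd xy + h *\<^sub>R (F (fst xy) - F (snd xy)))
                    / normPQ p Q (fst xy - snd xy) - 1))"

definition Ftilde :: "(real^'n \<Rightarrow> real^'n) \<Rightarrow> (real^'n)^'N \<Rightarrow> (real^'n)^'N" where
  "Ftilde F u = (\<chi> k. F (u $ k))"

definition kron_apply :: "real^'N^'N \<Rightarrow> real^'n^'n \<Rightarrow> (real^'n)^'N \<Rightarrow> (real^'n)^'N" where
  "kron_apply L D u = (\<chi> k. \<Sum>j\<in>UNIV. (L $ k $ j) *\<^sub>R (D *v (u $ j)))"

definition pos_diag :: "real^'n^'n \<Rightarrow> bool" where
  "pos_diag A \<longleftrightarrow> (\<forall>i j. i \<noteq> j \<longrightarrow> A $ i $ j = 0) \<and> (\<forall>i. A $ i $ i > 0)"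

definition graph_laplacian :: "real^'N^'N \<Rightarrow> bool" where
  "graph_laplacian L \<longleftrightarrow> transpose L = L \<and> (\<forall>i j. i \<noteq> j \<longrightarrow> L $ i $ j \<le> 0)
      \<and> L *v (\<chi> i. 1) = 0"

definition is_solution ::
  "(real^'n \<Rightarrow> real^'n) \<Rightarrow> real^'N^'N \<Rightarrow> real^'n^'n \<Rightarrow> (real^'n) set \<Rightarrow> (real \<Rightarrow> (real^'n)^'N) \<Rightarrow> bool" where
  "is_solution F L D V u \<longleftrightarrow>
     (\<forall>t\<ge>0. \<forall>k. u t $ k \<in> V) \<and>
     (\<exists>u'. (\<forall>t\<ge>0. (u has_vector_derivative u' t) (at t within {0..}))
           \<and> continuous_on {0..} u'
           \<and> (\<forall>t\<ge>0. u' t = Ftilde F (u t) - kron_apply L D (u t)))"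

end

theory Submission
  imports Defs
begin

text \<open>The difference \<open>w = u - v\<close> satisfies \<open>w' = (F~(u) - F~(v)) - (L \<otimes> D) w\<close>. An Euler step
  of length \<open>h\<close> is the average of a reaction step and a diffusion step, each of length \<open>2h\<close>.
  By the definition of \<open>c = M\<^sub>p\<^sub>,\<^sub>Q[F]\<close>, the reaction step multiplies the block norm by at
  most \<open>1 + 2h (c + o(1))\<close>. For small \<open>h\<close> the diffusion step \<open>I - 2h (L \<otimes> D)\<close> acts on each
  coordinate of the blocks through a doubly stochastic matrix, so by Jensen's inequality it does
  not increase the block norm. Hence the upper right Dini derivative of \<open>\<parallel>w(t)\<parallel>\<^sub>p\<^sub>,\<^sub>Q\<close> is at
  most \<open>c \<parallel>w(t)\<parallel>\<^sub>p\<^sub>,\<^sub>Q\<close>, and a comparison argument gives the exponential bound.\<close>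

lemma ereal_ge_one_cases:
  assumes "1 \<le> p"
  obtains "p = \<infinity>" | P where "p = ereal P" "1 \<le> P"
  using assms by (cases p) auto

lemma pnorm_ereal: "pnorm (ereal P) x = (\<Sum>i\<in>UNIV. \<bar>x $ i\<bar> powr P) powr (1 / P)"
  by (simp add: pnorm_def)

lemma pnorm_infinity_le_iff: "pnorm \<infinity> x \<le> M \<longleftrightarrow> (\<forall>i. \<bar>x $ i\<bar> \<le> M)"
  by (simp add: pnorm_def)

lemma pnorm_ereal_powr:
  assumes "1 \<le> P"
  shows "pnorm (ereal P) x powr P = (\<Sum>i\<in>UNIV. \<bar>x $ i\<bar> powr P)"
  using assms by (simp add: pnorm_ereal powr_powr sum_nonneg)

lemma abs_le_pnorm:
  assumes "1 \<le> p"
  shows "\<bar>x $ i\<bar> \<le> pnorm p x"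
  using assms
proof (cases rule: ereal_ge_one_cases)
  case 1
  then show ?thesis by (simp add: pnorm_def)
next
  case (2 P)
  have "\<bar>x $ i\<bar> = (\<bar>x $ i\<bar> powr P) powr (1 / P)"
    using 2 by (simp add: powr_powr)
  also have "\<dots> \<le> (\<Sum>j\<in>UNIV. \<bar>x $ j\<bar> powr P) powr (1 / P)"
    using 2 by (intro powr_mono2 member_le_sum) (auto intro: sum_nonneg)
  finally show ?thesis
    using 2 by (simp add: pnorm_ereal)
qed

lemma pnorm_nonneg [simp]: "0 \<le> pnorm p x"
  by (cases "p = \<infinity>") (auto simp: pnorm_def Max_ge_iff)

lemma pnorm_mono:
  assumes "1 \<le> p" "\<And>i. \<bar>x $ i\<bar> \<le> \<bar>y $ i\<bar>"
  shows "pnorm p x \<le> pnorm p y"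
  using assms(1)
proof (cases rule: ereal_ge_one_cases)
  case 1
  then show ?thesis
    using assms abs_le_pnorm[of p y] by (auto simp: pnorm_infinity_le_iff intro: order_trans)
next
  case (2 P)
  then show ?thesis
    using assms(2) by (auto simp: pnorm_ereal intro!: powr_mono2 sum_mono sum_nonneg)
qed

lemma pnorm_zero [simp]: "1 \<le> p \<Longrightarrow> pnorm p 0 = 0"
  by (cases rule: ereal_ge_one_cases) (auto simp: pnorm_def)

lemma pnorm_eq_0_iff:
  assumes "1 \<le> p"
  shows "pnorm p x = 0 \<longleftrightarrow> x = 0"
proof
  assume "pnorm p x = 0"
  then have "\<bar>x $ i\<bar> \<le> 0" for i
    using abs_le_pnorm[OF assms, of x i] by simp
  then show "x = 0"
    by (simp add: vec_eq_iff)
qed (simp add: assms)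

lemma pnorm_scaleR:
  assumes "1 \<le> p"
  shows "pnorm p (a *\<^sub>R x) = \<bar>a\<bar> * pnorm p x"
  using assms
proof (cases rule: ereal_ge_one_cases)
  case 1
  have "range (\<lambda>i. \<bar>(a *\<^sub>R x) $ i\<bar>) = (\<lambda>t. \<bar>a\<bar> * t) ` range (\<lambda>i. \<bar>x $ i\<bar>)"
    by (auto simp: abs_mult)
  then show ?thesis
    using 1 by (simp add: pnorm_def mono_Max_commute[symmetric] mono_def mult_left_mono)
next
  case (2 P)
  have "(\<Sum>i\<in>UNIV. \<bar>(a *\<^sub>R x) $ i\<bar> powr P) = \<bar>a\<bar> powr P * (\<Sum>i\<in>UNIV. \<bar>x $ i\<bar> powr P)"
    by (simp add: abs_mult powr_mult sum_distrib_left)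
  then show ?thesis
    using 2 by (simp add: pnorm_ereal powr_mult powr_powr sum_nonneg)
qed

lemma convex_on_abs_powr:
  fixes P :: real
  assumes "1 \<le> P"
  shows "convex_on UNIV (\<lambda>t. \<bar>t\<bar> powr P)"
proof (rule convex_onI)
  fix t :: real and a b
  assume t: "0 < t" "t < 1"
  have powr_convex: "convex_on {0<..} (\<lambda>x::real. x powr P)"
    using assms by (rule powr_convex)
  have "\<bar>(1 - t) * a + t * b\<bar> powr P \<le> ((1 - t) * \<bar>a\<bar> + t * \<bar>b\<bar>) powr P"
    using t assms by (intro powr_mono2) (auto intro: order_trans[OF abs_triangle_ineq] simp: abs_mult)
  also have "\<dots> \<le> (1 - t) * \<bar>a\<bar> powr P + t * \<bar>b\<bar> powr P"
  proof (cases "a = 0 \<or> b = 0")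
    case True
    have "s powr P \<le> s" if "0 \<le> s" "s \<le> 1" for s :: real
      using that assms powr_mono'[of 1 P s] by auto
    then show ?thesis
      using True t by (auto simp: powr_mult intro!: mult_right_mono)
  next
    case False
    then show ?thesis
      using convex_onD[OF powr_convex, of t "\<bar>a\<bar>" "\<bar>b\<bar>"] t by simp
  qed
  finally show "\<bar>(1 - t) *\<^sub>R a + t *\<^sub>R b\<bar> powr P \<le> (1 - t) * \<bar>a\<bar> powr P + t * \<bar>b\<bar> powr P"
    by simp
qed simp

lemma powr_le_powr_cancel:
  fixes x y a :: real
  assumes "x powr a \<le> y powr a" "0 < a" "0 \<le> y"
  shows "x \<le> y"
  using assms powr_less_mono2[of a y x] by (meson not_le)

lemma pnorm_convex_comb_le_1:
  assumes "1 \<le> p" "0 \<le> t" "t \<le> 1" "pnorm p x = 1" "pnorm p y = 1"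
  shows "pnorm p ((1 - t) *\<^sub>R x + t *\<^sub>R y) \<le> 1"
  using assms(1)
proof (cases rule: ereal_ge_one_cases)
  case 1
  then show ?thesis
    using assms abs_le_pnorm[of p x] abs_le_pnorm[of p y]
    by (auto simp: pnorm_infinity_le_iff abs_mult
        intro!: order_trans[OF abs_triangle_ineq] convex_bound_le)
next
  case (2 P)
  have "(\<Sum>i\<in>UNIV. \<bar>((1 - t) *\<^sub>R x + t *\<^sub>R y) $ i\<bar> powr P)
      \<le> (\<Sum>i\<in>UNIV. (1 - t) * \<bar>x $ i\<bar> powr P + t * \<bar>y $ i\<bar> powr P)"
    using convex_onD[OF convex_on_abs_powr[OF \<open>1 \<le> P\<close>]] assms(2,3) by (intro sum_mono) simp
  also have "\<dots> = (1 - t) * pnorm p x powr P + t * pnorm p y powr P"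
    using 2 by (simp add: pnorm_ereal_powr sum.distrib sum_distrib_left)
  also have "\<dots> = 1"
    using assms by simp
  finally have "pnorm p ((1 - t) *\<^sub>R x + t *\<^sub>R y) powr P \<le> 1 powr P"
    using 2 by (simp add: pnorm_ereal_powr)
  then show ?thesis
    by (rule powr_le_powr_cancel) (use 2 in simp_all)
qed

lemma pnorm_triangle:
  assumes p: "1 \<le> p"
  shows "pnorm p (x + y) \<le> pnorm p x + pnorm p y"
proof (cases "x = 0 \<or> y = 0")
  case True
  then show ?thesis
    using p by auto
next
  case False
  define A B where "A = pnorm p x" and "B = pnorm p y"
  have A: "A > 0" and B: "B > 0"
    using False pnorm_nonneg pnorm_eq_0_iff[OF p] by (auto simp: A_def B_def order_le_less)
  define t where "t = B / (A + B)"
  have t: "0 \<le> t" "t \<le> 1" "1 - t = A / (A + B)"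
    using A B by (auto simp: t_def field_simps)
  have "(A + B) * ((1 - t) * (1 / A)) = 1" "(A + B) * (t * (1 / B)) = 1"
    using A B by (simp_all add: t_def field_simps)
  then have "x + y = (A + B) *\<^sub>R ((1 - t) *\<^sub>R ((1 / A) *\<^sub>R x) + t *\<^sub>R ((1 / B) *\<^sub>R y))"
    by (simp only: scaleR_add_right scaleR_scaleR mult.assoc scaleR_one)
  then have "pnorm p (x + y) = (A + B) * pnorm p ((1 - t) *\<^sub>R ((1 / A) *\<^sub>R x) + t *\<^sub>R ((1 / B) *\<^sub>R y))"
    using A B by (simp add: pnorm_scaleR[OF p])
  also have "\<dots> \<le> (A + B) * 1"
    using p A B t by (intro mult_left_mono pnorm_convex_comb_le_1)
      (auto simp: pnorm_scaleR[OF p] A_def B_def)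
  finally show ?thesis
    by (simp add: A_def B_def)
qed

lemma pnorm_sum_le: "1 \<le> p \<Longrightarrow> pnorm p (\<Sum>i\<in>S. f i) \<le> (\<Sum>i\<in>S. pnorm p (f i))"
  by (induction S rule: infinite_finite_induct) (auto intro: order_trans[OF pnorm_triangle])

lemma pnorm_axis:
  assumes "1 \<le> p"
  shows "pnorm p (axis i 1) = 1"
  using assms
proof (cases rule: ereal_ge_one_cases)
  case 1
  then show ?thesis
    using abs_le_pnorm[OF assms, of "axis i 1" i]
    by (intro antisym) (auto simp: pnorm_infinity_le_iff axis_def)
next
  case (2 P)
  then have "\<bar>axis i 1 $ j\<bar> powr P = (if j = i then 1 else 0)" for j
    by (simp add: axis_def)
  then show ?thesis
    using 2 by (simp add: pnorm_ereal)
qed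

lemma pnorm_le_sum_abs:
  assumes "1 \<le> p"
  shows "pnorm p x \<le> (\<Sum>i\<in>UNIV. \<bar>x $ i\<bar>)"
proof -
  have "pnorm p x = pnorm p (\<Sum>i\<in>UNIV. x $ i *\<^sub>R axis i 1)"
    using basis_expansion[of x] by (simp add: scalar_mult_eq_scaleR)
  also have "\<dots> \<le> (\<Sum>i\<in>UNIV. \<bar>x $ i\<bar>)"
    using assms by (auto intro: order_trans[OF pnorm_sum_le] simp: pnorm_scaleR pnorm_axis)
  finally show ?thesis .
qed

lemma pnorm_le_mult:
  assumes "1 \<le> p" "0 \<le> a" "\<And>i. \<bar>x $ i\<bar> \<le> a * \<bar>y $ i\<bar>"
  shows "pnorm p x \<le> a * pnorm p y"
  using pnorm_mono[OF assms(1), of x "a *\<^sub>R y"] assms by (simp add: pnorm_scaleR abs_mult)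

lemma pos_diag_mult_vec:
  assumes "pos_diag Q"
  shows "(Q *v x) $ i = Q $ i $ i * x $ i"
proof -
  have "(\<Sum>j\<in>UNIV. Q $ i $ j * x $ j) = (\<Sum>j\<in>UNIV. if j = i then Q $ i $ i * x $ i else 0)"
    using assms by (intro sum.cong) (auto simp: pos_diag_def)
  then show ?thesis
    by (simp add: matrix_vector_mult_def)
qed

lemma normPQ_nonneg [simp]: "0 \<le> normPQ p Q x"
  by (simp add: normPQ_def)

lemma normPQ_zero [simp]: "1 \<le> p \<Longrightarrow> normPQ p Q 0 = 0"
  by (simp add: normPQ_def)

lemma normPQ_triangle: "1 \<le> p \<Longrightarrow> normPQ p Q (x + y) \<le> normPQ p Q x + normPQ p Q y"
  by (simp add: normPQ_def matrix_vector_right_distrib pnorm_triangle)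

lemma normPQ_scaleR: "1 \<le> p \<Longrightarrow> normPQ p Q (a *\<^sub>R x) = \<bar>a\<bar> * normPQ p Q x"
  by (simp add: normPQ_def matrix_vector_mult_scaleR pnorm_scaleR)

lemma normPQ_le_norm:
  assumes "1 \<le> p" "pos_diag Q"
  shows "normPQ p Q x \<le> (\<Sum>i\<in>UNIV. Q $ i $ i) * norm x"
proof -
  have "normPQ p Q x \<le> (\<Sum>i\<in>UNIV. Q $ i $ i * \<bar>x $ i\<bar>)"
    using pnorm_le_sum_abs[OF assms(1), of "Q *v x"] assms(2)
    by (simp add: normPQ_def pos_diag_mult_vec abs_mult pos_diag_def less_imp_le)
  also have "\<dots> \<le> (\<Sum>i\<in>UNIV. Q $ i $ i * norm x)"
    using assms(2) by (intro sum_mono mult_left_mono component_le_norm_cart)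
      (auto simp: pos_diag_def less_imp_le)
  finally show ?thesis
    by (simp add: sum_distrib_right)
qed

lemma norm_le_normPQ:
  assumes "1 \<le> p" "pos_diag Q"
  shows "norm x \<le> (\<Sum>i\<in>UNIV. 1 / Q $ i $ i) * normPQ p Q x"
proof -
  have Q: "Q $ i $ i > 0" for i
    using assms(2) by (simp add: pos_diag_def)
  have "\<bar>x $ i\<bar> \<le> 1 / Q $ i $ i * normPQ p Q x" for i
    using abs_le_pnorm[OF assms(1), of "Q *v x" i] Q[of i]
    by (simp add: normPQ_def pos_diag_mult_vec[OF assms(2)] abs_mult field_simps)
  then have "(\<Sum>i\<in>UNIV. \<bar>x $ i\<bar>) \<le> (\<Sum>i\<in>UNIV. 1 / Q $ i $ i * normPQ p Q x)"
    by (rule sum_mono)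
  then show ?thesis
    using norm_le_l1_cart[of x] by (simp add: sum_distrib_right)
qed

lemma normPQ_pos:
  assumes "1 \<le> p" "pos_diag Q" "x \<noteq> 0"
  shows "0 < normPQ p Q x"
  using norm_le_normPQ[OF assms(1,2), of x] assms(3) normPQ_nonneg[of p Q x]
  by (metis le_less mult_zero_right norm_le_zero_iff)

lemma lipschitz_on_normPQ_bound:
  assumes "1 \<le> p" "pos_diag Q" "K-lipschitz_on V F"
  obtains K' where "\<And>x y. x \<in> V \<Longrightarrow> y \<in> V \<Longrightarrow> normPQ p Q (F x - F y) \<le> K' * normPQ p Q (x - y)"
proof
  define C1 C2 where "C1 = (\<Sum>i\<in>UNIV. Q $ i $ i)" and "C2 = (\<Sum>i\<in>UNIV. 1 / Q $ i $ i)"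
  have "0 \<le> C1" "0 \<le> K"
    using assms(2) lipschitz_on_nonneg[OF assms(3)]
    by (auto simp: C1_def pos_diag_def less_imp_le intro: sum_nonneg)
  fix x y
  assume "x \<in> V" "y \<in> V"
  have "normPQ p Q (F x - F y) \<le> C1 * norm (F x - F y)"
    unfolding C1_def by (rule normPQ_le_norm[OF assms(1,2)])
  also have "\<dots> \<le> C1 * (K * norm (x - y))"
    using lipschitz_onD[OF assms(3) \<open>x \<in> V\<close> \<open>y \<in> V\<close>] \<open>0 \<le> C1\<close>
    by (intro mult_left_mono) (auto simp: dist_norm)
  also have "\<dots> \<le> C1 * (K * (C2 * normPQ p Q (x - y)))"
    using norm_le_normPQ[OF assms(1,2), of "x - y"] \<open>0 \<le> C1\<close> \<open>0 \<le> K\<close>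
    by (auto simp: C2_def intro!: mult_left_mono)
  finally show "normPQ p Q (F x - F y) \<le> C1 * K * C2 * normPQ p Q (x - y)"
    by (simp add: mult.assoc)
qed

lemma normPQ_block_nonneg [simp]: "0 \<le> normPQ_block p Q u"
  by (simp add: normPQ_block_def)

lemma normPQ_block_zero [simp]: "1 \<le> p \<Longrightarrow> normPQ_block p Q 0 = 0"
  by (simp add: normPQ_block_def zero_vec_def[symmetric])

lemma normPQ_block_le_mult:
  assumes "1 \<le> p" "0 \<le> a" "\<And>k. normPQ p Q (u $ k) \<le> a * normPQ p Q (v $ k)"
  shows "normPQ_block p Q u \<le> a * normPQ_block p Q v"
  unfolding normPQ_block_def using assms by (intro pnorm_le_mult) auto

lemma normPQ_block_triangle:
  assumes "1 \<le> p"
  shows "normPQ_block p Q (u + v) \<le> normPQ_block p Q u + normPQ_block p Q v"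
proof -
  have "normPQ_block p Q (u + v) \<le> pnorm p ((\<chi> k. normPQ p Q (u $ k)) + (\<chi> k. normPQ p Q (v $ k)))"
    unfolding normPQ_block_def using assms
    by (intro pnorm_mono) (auto intro: order_trans[OF normPQ_triangle])
  also have "\<dots> \<le> normPQ_block p Q u + normPQ_block p Q v"
    unfolding normPQ_block_def by (rule pnorm_triangle[OF assms])
  finally show ?thesis .
qed

lemma normPQ_block_scaleR:
  assumes "1 \<le> p"
  shows "normPQ_block p Q (a *\<^sub>R u) = \<bar>a\<bar> * normPQ_block p Q u"
proof -
  have "(\<chi> k. normPQ p Q ((a *\<^sub>R u) $ k)) = \<bar>a\<bar> *\<^sub>R (\<chi> k. normPQ p Q (u $ k))"
    using assms by (simp add: vec_eq_iff normPQ_scaleR)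
  then show ?thesis
    using assms by (simp add: normPQ_block_def pnorm_scaleR)
qed

lemma normPQ_block_le_norm:
  fixes u :: "(real^'n)^'N"
  assumes "1 \<le> p" "pos_diag Q"
  shows "normPQ_block p Q u \<le> (CARD('N) * (\<Sum>i\<in>UNIV. Q $ i $ i)) * norm u"
proof -
  have "normPQ_block p Q u \<le> (\<Sum>k\<in>UNIV. normPQ p Q (u $ k))"
    using pnorm_le_sum_abs[OF assms(1), of "\<chi> k. normPQ p Q (u $ k)"] by (simp add: normPQ_block_def)
  also have "\<dots> \<le> (\<Sum>k\<in>(UNIV :: 'N set). (\<Sum>i\<in>UNIV. Q $ i $ i) * norm u)"
    using assms(2) by (intro sum_mono order_trans[OF normPQ_le_norm[OF assms]] mult_left_mono)
      (auto simp: Finite_Cartesian_Product.norm_nth_le pos_diag_def less_imp_le intro: sum_nonneg)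
  finally show ?thesis
    by simp
qed

lemma continuous_on_normPQ_block:
  assumes "1 \<le> p" "pos_diag Q"
  shows "continuous_on S (normPQ_block p Q :: (real^'n)^'N \<Rightarrow> real)"
proof (rule lipschitz_on_continuous_on)
  show "(CARD('N) * (\<Sum>i\<in>UNIV. Q $ i $ i))-lipschitz_on S (normPQ_block p Q :: (real^'n)^'N \<Rightarrow> real)"
  proof (rule lipschitz_onI)
    fix u v :: "(real^'n)^'N"
    have "\<bar>normPQ_block p Q u - normPQ_block p Q v\<bar> \<le> normPQ_block p Q (u - v)"
      using normPQ_block_triangle[OF assms(1), of Q "u - v" v] normPQ_block_triangle[OF assms(1), of Q "v - u" u]
        normPQ_block_scaleR[OF assms(1), of Q "-1" "u - v"]
      by (simp add: abs_le_iff)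
    also have "\<dots> \<le> (CARD('N) * (\<Sum>i\<in>UNIV. Q $ i $ i)) * norm (u - v)"
      by (rule normPQ_block_le_norm[OF assms])
    finally show "dist (normPQ_block p Q u) (normPQ_block p Q v)
        \<le> (CARD('N) * (\<Sum>i\<in>UNIV. Q $ i $ i)) * dist u v"
      by (simp add: dist_norm)
  qed (use assms in \<open>auto simp: pos_diag_def less_imp_le intro!: mult_nonneg_nonneg sum_nonneg\<close>)
qed

lemma pnorm_block_doubly_stochastic_le:
  fixes y :: "(real^'n)^'N" and P :: "'n \<Rightarrow> 'N \<Rightarrow> 'N \<Rightarrow> real"
  assumes p: "1 \<le> p" and nonneg: "\<And>i k j. 0 \<le> P i k j"
    and rows: "\<And>i k. (\<Sum>j\<in>UNIV. P i k j) = 1"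
    and cols: "\<And>i j. (\<Sum>k\<in>UNIV. P i k j) = 1"
  shows "pnorm p (\<chi> k. pnorm p (\<chi> i. \<Sum>j\<in>UNIV. P i k j * y $ j $ i))
      \<le> pnorm p (\<chi> k. pnorm p (y $ k))"
  using p
proof (cases rule: ereal_ge_one_cases)
  case 1
  define M where "M = pnorm p (\<chi> k. pnorm p (y $ k))"
  have y: "\<bar>y $ j $ i\<bar> \<le> M" for j i
    using abs_le_pnorm[OF p, of "y $ j" i] abs_le_pnorm[OF p, of "\<chi> k. pnorm p (y $ k)" j]
    by (simp add: M_def)
  have "\<bar>\<Sum>j\<in>UNIV. P i k j * y $ j $ i\<bar> \<le> (\<Sum>j\<in>UNIV. P i k j) * M" for i k
    unfolding sum_distrib_right using nonneg y
    by (intro order_trans[OF sum_abs] sum_mono) (simp add: abs_mult mult_left_mono)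
  then show ?thesis
    using 1 by (simp add: pnorm_infinity_le_iff M_def rows)
next
  case (2 R)
  have jensen: "\<bar>\<Sum>j\<in>UNIV. P i k j * y $ j $ i\<bar> powr R \<le> (\<Sum>j\<in>UNIV. P i k j * \<bar>y $ j $ i\<bar> powr R)"
    for k i
    using convex_on_sum[OF _ _ convex_on_abs_powr[OF \<open>1 \<le> R\<close>], of UNIV "P i k" "\<lambda>j. y $ j $ i"]
      rows nonneg by simp
  have "(\<Sum>k\<in>UNIV. \<Sum>i\<in>UNIV. \<bar>\<Sum>j\<in>UNIV. P i k j * y $ j $ i\<bar> powr R)
        \<le> (\<Sum>k\<in>UNIV. \<Sum>i\<in>UNIV. \<Sum>j\<in>UNIV. P i k j * \<bar>y $ j $ i\<bar> powr R)"
    by (intro sum_mono jensen)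
  also have "\<dots> = (\<Sum>i\<in>UNIV. \<Sum>k\<in>UNIV. \<Sum>j\<in>UNIV. P i k j * \<bar>y $ j $ i\<bar> powr R)"
    by (rule sum.swap)
  also have "\<dots> = (\<Sum>i\<in>UNIV. \<Sum>j\<in>UNIV. \<Sum>k\<in>UNIV. P i k j * \<bar>y $ j $ i\<bar> powr R)"
    by (intro sum.cong refl sum.swap)
  also have "\<dots> = (\<Sum>i\<in>UNIV. \<Sum>j\<in>UNIV. (\<Sum>k\<in>UNIV. P i k j) * \<bar>y $ j $ i\<bar> powr R)"
    by (intro sum.cong refl sum_distrib_right[symmetric])
  also have "\<dots> = (\<Sum>j\<in>UNIV. \<Sum>i\<in>UNIV. \<bar>y $ j $ i\<bar> powr R)"
    unfolding cols mult_1 by (rule sum.swap)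
  finally have "pnorm p (\<chi> k. pnorm p (\<chi> i. \<Sum>j\<in>UNIV. P i k j * y $ j $ i)) powr R
      \<le> pnorm p (\<chi> k. pnorm p (y $ k)) powr R"
    using 2 by (simp add: pnorm_ereal_powr)
  then show ?thesis
    by (rule powr_le_powr_cancel) (use 2 in simp_all)
qed

lemma graph_laplacian_row_sum:
  assumes "graph_laplacian L"
  shows "(\<Sum>j\<in>UNIV. L $ k $ j) = 0"
proof -
  have "(L *v (\<chi> i. 1)) $ k = 0"
    using assms by (simp add: graph_laplacian_def)
  then show ?thesis
    by (simp add: matrix_vector_mult_def)
qed

lemma graph_laplacian_col_sum:
  assumes "graph_laplacian L"
  shows "(\<Sum>k\<in>UNIV. L $ k $ j) = 0"
proof -
  have "L $ k $ j = L $ j $ k" for k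
    using arg_cong[of _ _ "\<lambda>M. M $ j $ k", OF conjunct1[OF assms[unfolded graph_laplacian_def]]]
    by (simp add: transpose_def)
  then show ?thesis
    using graph_laplacian_row_sum[OF assms, of j] by simp
qed

lemma kron_apply_component:
  assumes "pos_diag D"
  shows "kron_apply L D x $ k $ i = D $ i $ i * (\<Sum>j\<in>UNIV. L $ k $ j * x $ j $ i)"
  by (simp add: kron_apply_def sum_component pos_diag_mult_vec[OF assms] sum_distrib_left mult_ac)

lemma kron_apply_diff: "kron_apply L D (x - y) = kron_apply L D x - kron_apply L D y"
  by (simp add: kron_apply_def vec_eq_iff matrix_vector_mult_diff_distrib scaleR_diff_right
      sum_subtractf)

lemma normPQ_block_diffusion_step_le:
  fixes L :: "real^'N^'N" and D Q :: "real^'n^'n"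
  assumes p: "1 \<le> p" and D: "pos_diag D" and Q: "pos_diag Q" and L: "graph_laplacian L"
    and h: "0 \<le> h" "\<And>i k. h * D $ i $ i * \<bar>L $ k $ k\<bar> \<le> 1"
  shows "normPQ_block p Q (x - h *\<^sub>R kron_apply L D x) \<le> normPQ_block p Q x"
proof -
  define P where "P i k j = (if k = j then 1 else 0) - h * D $ i $ i * L $ k $ j" for i k j
  have hD: "0 \<le> h * D $ i $ i" for i
    using h(1) D by (simp add: pos_diag_def less_imp_le)
  have "0 \<le> P i k j" for i k j
  proof (cases "k = j")
    case True
    then show ?thesis
      using h(2)[of i k] hD[of i] abs_ge_self[of "L $ k $ k"] mult_left_mono[of _ _ "h * D $ i $ i"]
      by (force simp: P_def)
  next
    case False
    then show ?thesis
      using L hD[of i] by (simp add: P_def graph_laplacian_def mult_nonneg_nonpos)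
  qed
  moreover have "(\<Sum>j\<in>UNIV. P i k j) = 1" "(\<Sum>k\<in>UNIV. P i k j) = 1" for i j k
    by (simp_all add: P_def sum_subtractf sum_distrib_left[symmetric] mult.assoc
        graph_laplacian_row_sum[OF L] graph_laplacian_col_sum[OF L])
  moreover have average: "(\<Sum>j\<in>UNIV. P i k j * z j) = z k - h * D $ i $ i * (\<Sum>j\<in>UNIV. L $ k $ j * z j)"
    for i k and z :: "'N \<Rightarrow> real"
  proof -
    have "(\<Sum>j\<in>UNIV. P i k j * z j)
        = (\<Sum>j\<in>UNIV. (if k = j then z j else 0) - h * D $ i $ i * (L $ k $ j * z j))"
      by (intro sum.cong) (auto simp: P_def algebra_simps)
    then show ?thesis
      by (simp add: sum_subtractf sum_distrib_left)
  qed
  moreover have "Q *v (x - h *\<^sub>R kron_apply L D x) $ k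
      = (\<chi> i. \<Sum>j\<in>UNIV. P i k j * (\<chi> j. Q *v x $ j) $ j $ i)" for k
    unfolding vec_eq_iff vec_lambda_beta pos_diag_mult_vec[OF Q] average
    by (simp add: kron_apply_component[OF D] sum_distrib_left algebra_simps)
  ultimately show ?thesis
    using pnorm_block_doubly_stochastic_le[OF p, of P "\<chi> j. Q *v x $ j"]
    by (simp add: normPQ_block_def normPQ_def)
qed

definition log_quotient ::
  "ereal \<Rightarrow> real^'n^'n \<Rightarrow> (real^'n \<Rightarrow> real^'n) \<Rightarrow> real \<Rightarrow> real^'n \<Rightarrow> real^'n \<Rightarrow> real" where
  "log_quotient p Q F h x y =
     (1 / h) * (normPQ p Q (x - y + h *\<^sub>R (F x - F y)) / normPQ p Q (x - y) - 1)"

definition logLip_quotient ::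
  "ereal \<Rightarrow> real^'n^'n \<Rightarrow> (real^'n) set \<Rightarrow> (real^'n \<Rightarrow> real^'n) \<Rightarrow> real \<Rightarrow> real" where
  "logLip_quotient p Q V F h =
     (SUP (x, y) \<in> {(x, y). x \<in> V \<and> y \<in> V \<and> x \<noteq> y}. log_quotient p Q F h x y)"

lemma logLip_eq_Lim: "logLip p Q V F = Lim (at_right 0) (logLip_quotient p Q V F)"
  by (simp add: logLip_def logLip_quotient_def[abs_def] log_quotient_def case_prod_beta')

lemma normPQ_step_eq:
  assumes "1 \<le> p" "pos_diag Q" "x \<noteq> y" "0 < h"
  shows "normPQ p Q (x - y + h *\<^sub>R (F x - F y)) = (1 + h * log_quotient p Q F h x y) * normPQ p Q (x - y)"
  using assms normPQ_pos[OF assms(1,2), of "x - y"] by (simp add: log_quotient_def field_simps)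

lemma log_quotient_mono:
  assumes p: "1 \<le> p" and Q: "pos_diag Q" and "x \<noteq> y" "0 < h1" "h1 \<le> h2"
  shows "log_quotient p Q F h1 x y \<le> log_quotient p Q F h2 x y"
proof -
  define a b N where "a = x - y" and "b = F x - F y" and "N = normPQ p Q"
  define s where "s = h1 / h2"
  have s: "0 < s" "s \<le> 1" "s * h2 = h1"
    using assms by (auto simp: s_def)
  have Na: "0 < N a"
    using normPQ_pos[OF p Q] \<open>x \<noteq> y\<close> by (simp add: N_def a_def)
  have comb: "(1 - s) *\<^sub>R a + s *\<^sub>R (a + h2 *\<^sub>R b) = a + h1 *\<^sub>R b"
    by (simp add: scaleR_add_right scaleR_diff_left s(3))
  have "(1 + h1 * log_quotient p Q F h1 x y) * N a = N (a + h1 *\<^sub>R b)"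
    using normPQ_step_eq[OF p Q \<open>x \<noteq> y\<close> \<open>0 < h1\<close>] by (simp add: N_def a_def b_def)
  also have "\<dots> = N ((1 - s) *\<^sub>R a + s *\<^sub>R (a + h2 *\<^sub>R b))"
    by (simp only: comb)
  also have "\<dots> \<le> (1 - s) * N a + s * N (a + h2 *\<^sub>R b)"
    using normPQ_triangle[OF p, of Q "(1 - s) *\<^sub>R a" "s *\<^sub>R (a + h2 *\<^sub>R b)"] s
    by (simp add: N_def normPQ_scaleR[OF p])
  also have "\<dots> = (1 + h1 * log_quotient p Q F h2 x y) * N a"
    using normPQ_step_eq[OF p Q \<open>x \<noteq> y\<close>, of h2 F] assms s(3)[symmetric]
    by (simp add: N_def a_def b_def algebra_simps)
  finally show ?thesis
    using Na \<open>0 < h1\<close> by (simp add: mult_le_cancel_right)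
qed

lemma abs_log_quotient_le:
  assumes p: "1 \<le> p" and Q: "pos_diag Q" and "x \<noteq> y" "0 < h"
    and lip: "normPQ p Q (F x - F y) \<le> K' * normPQ p Q (x - y)"
  shows "\<bar>log_quotient p Q F h x y\<bar> \<le> K'"
proof -
  define a b N where "a = x - y" and "b = F x - F y" and "N = normPQ p Q"
  have Na: "0 < N a"
    using normPQ_pos[OF p Q] \<open>x \<noteq> y\<close> by (simp add: N_def a_def)
  have "\<bar>N (a + h *\<^sub>R b) - N a\<bar> \<le> h * N b"
    using normPQ_triangle[OF p, of Q a "h *\<^sub>R b"] normPQ_triangle[OF p, of Q "a + h *\<^sub>R b" "-h *\<^sub>R b"]
      normPQ_scaleR[OF p, of Q h b] normPQ_scaleR[OF p, of Q "-h" b] \<open>0 < h\<close>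
    by (simp add: N_def abs_le_iff)
  then have "h * \<bar>log_quotient p Q F h x y\<bar> * N a \<le> h * (K' * N a)"
    using normPQ_step_eq[OF p Q \<open>x \<noteq> y\<close> \<open>0 < h\<close>, of F] lip \<open>0 < h\<close>
      mult_left_mono[OF lip, of h]
    by (simp add: N_def a_def b_def algebra_simps abs_mult)
  then show ?thesis
    using Na \<open>0 < h\<close> by (simp add: mult.assoc)
qed

lemma log_quotient_le_logLip_quotient:
  assumes p: "1 \<le> p" and Q: "pos_diag Q" and lip: "K-lipschitz_on V F"
    and "x \<in> V" "y \<in> V" "x \<noteq> y" "0 < h"
  shows "log_quotient p Q F h x y \<le> logLip_quotient p Q V F h"
proof -
  obtain K' where K': "\<And>x y. x \<in> V \<Longrightarrow> y \<in> V \<Longrightarrow> normPQ p Q (F x - F y) \<le> K' * normPQ p Q (x - y)"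
    using lipschitz_on_normPQ_bound[OF p Q lip] by blast
  have "\<bar>log_quotient p Q F h x' y'\<bar> \<le> K'" if "x' \<in> V" "y' \<in> V" "x' \<noteq> y'" for x' y'
    using abs_log_quotient_le[OF p Q that(3) \<open>0 < h\<close> K'[OF that(1,2)]] .
  then have "bdd_above ((\<lambda>(x, y). log_quotient p Q F h x y) ` {(x, y). x \<in> V \<and> y \<in> V \<and> x \<noteq> y})"
    by (intro bdd_aboveI[of _ K']) (auto simp: abs_le_iff)
  then show ?thesis
    unfolding logLip_quotient_def using assms(4-6) by (intro cSUP_upper2[of _ _ "(x, y)"]) auto
qed

lemma logLip_quotient_tendsto:
  assumes p: "1 \<le> p" and Q: "pos_diag Q" and lip: "K-lipschitz_on V F"
    and "x0 \<in> V" "y0 \<in> V" "x0 \<noteq> y0"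
  shows "(logLip_quotient p Q V F \<longlongrightarrow> logLip p Q V F) (at_right 0)"
proof -
  define S where "S = {(x, y). x \<in> V \<and> y \<in> V \<and> x \<noteq> y}"
  obtain K' where K': "\<And>x y. x \<in> V \<Longrightarrow> y \<in> V \<Longrightarrow> normPQ p Q (F x - F y) \<le> K' * normPQ p Q (x - y)"
    using lipschitz_on_normPQ_bound[OF p Q lip] by blast
  have bound: "\<bar>log_quotient p Q F h x y\<bar> \<le> K'" if "x \<in> V" "y \<in> V" "x \<noteq> y" "0 < h" for x y h
    using abs_log_quotient_le[OF p Q that(3,4) K'[OF that(1,2)]] .
  then have bdd: "bdd_above ((\<lambda>(x, y). log_quotient p Q F h x y) ` S)" if "0 < h" for h
    using that by (intro bdd_aboveI[of _ K']) (auto simp: S_def abs_le_iff)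
  have mono: "logLip_quotient p Q V F h1 \<le> logLip_quotient p Q V F h2" if "0 < h1" "h1 \<le> h2" for h1 h2
    unfolding logLip_quotient_def S_def[symmetric]
  proof (rule cSUP_mono)
    show "S \<noteq> {}"
      using assms(4-6) by (auto simp: S_def)
    show "bdd_above ((\<lambda>(x, y). log_quotient p Q F h2 x y) ` S)"
      using that by (intro bdd) simp
    fix xy
    assume "xy \<in> S"
    then show "\<exists>xy'\<in>S. (case xy of (x, y) \<Rightarrow> log_quotient p Q F h1 x y)
        \<le> (case xy' of (x, y) \<Rightarrow> log_quotient p Q F h2 x y)"
      using log_quotient_mono[OF p Q _ that] by (intro bexI[of _ xy]) (auto simp: S_def)
  qed
  have bounded: "- K' \<le> logLip_quotient p Q V F h" if "0 < h" for h
    using bound[OF assms(4-6) that] log_quotient_le_logLip_quotient[OF p Q lip assms(4-6) that]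
    by (simp add: abs_le_iff)
  have lim: "(logLip_quotient p Q V F \<longlongrightarrow> Inf (logLip_quotient p Q V F ` {0<..})) (at_right 0)"
    using Lim_right_bound[of UNIV 0 "logLip_quotient p Q V F" "- K'"] mono bounded by simp
  then have "logLip p Q V F = Inf (logLip_quotient p Q V F ` {0<..})"
    unfolding logLip_eq_Lim by (rule tendsto_Lim[OF trivial_limit_at_right_real])
  then show ?thesis
    using lim by simp
qed

lemma normPQ_block_Ftilde_step_le:
  assumes p: "1 \<le> p" and Q: "pos_diag Q" and "0 < h" "0 \<le> 1 + h * b"
    and quotient: "\<And>x y. x \<in> V \<Longrightarrow> y \<in> V \<Longrightarrow> x \<noteq> y \<Longrightarrow> log_quotient p Q F h x y \<le> b"
    and x: "\<And>k. x $ k \<in> V" and y: "\<And>k. y $ k \<in> V"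
  shows "normPQ_block p Q (x - y + h *\<^sub>R (Ftilde F x - Ftilde F y)) \<le> (1 + h * b) * normPQ_block p Q (x - y)"
proof (rule normPQ_block_le_mult[OF p \<open>0 \<le> 1 + h * b\<close>])
  fix k
  show "normPQ p Q ((x - y + h *\<^sub>R (Ftilde F x - Ftilde F y)) $ k) \<le> (1 + h * b) * normPQ p Q ((x - y) $ k)"
  proof (cases "x $ k = y $ k")
    case True
    then show ?thesis
      using p by (simp add: Ftilde_def)
  next
    case False
    then show ?thesis
      using normPQ_step_eq[OF p Q False \<open>0 < h\<close>, of F] quotient[OF x y False] \<open>0 < h\<close>
      by (simp add: Ftilde_def mult_right_mono)
  qed
qed

lemma scaleR_half_split:
  fixes w a b :: "'a::real_vector"
  shows "w + h *\<^sub>R (a - b) = (1 / 2) *\<^sub>R (w + (2 * h) *\<^sub>R a) + (1 / 2) *\<^sub>R (w - (2 * h) *\<^sub>R b)"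
proof -
  have "(1 / 2) *\<^sub>R (w + (2 * h) *\<^sub>R a) + (1 / 2) *\<^sub>R (w - (2 * h) *\<^sub>R b)
      = ((1 / 2) + (1 / 2 :: real)) *\<^sub>R w + h *\<^sub>R a - h *\<^sub>R b"
    by (simp only: scaleR_add_right scaleR_diff_right scaleR_scaleR scaleR_add_left) simp
  then show ?thesis
    by (simp add: scaleR_diff_right)
qed

lemma normPQ_block_euler_step_le:
  assumes p: "1 \<le> p" and D: "pos_diag D" and Q: "pos_diag Q" and L: "graph_laplacian L"
    and "0 < h" "0 \<le> 1 + 2 * h * b" "\<And>i k. 2 * h * D $ i $ i * \<bar>L $ k $ k\<bar> \<le> 1"
    and quotient: "\<And>x y. x \<in> V \<Longrightarrow> y \<in> V \<Longrightarrow> x \<noteq> y \<Longrightarrow> log_quotient p Q F (2 * h) x y \<le> b"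
    and x: "\<And>k. x $ k \<in> V" and y: "\<And>k. y $ k \<in> V"
  shows "normPQ_block p Q (x - y + h *\<^sub>R (Ftilde F x - Ftilde F y - kron_apply L D (x - y)))
      \<le> (1 + h * b) * normPQ_block p Q (x - y)"
proof -
  define w dF where "w = x - y" and "dF = Ftilde F x - Ftilde F y"
  have "w + h *\<^sub>R (dF - kron_apply L D w)
      = (1 / 2) *\<^sub>R (w + (2 * h) *\<^sub>R dF) + (1 / 2) *\<^sub>R (w - (2 * h) *\<^sub>R kron_apply L D w)"
    by (rule scaleR_half_split)
  then have "normPQ_block p Q (w + h *\<^sub>R (dF - kron_apply L D w))
      \<le> (1 / 2) * normPQ_block p Q (w + (2 * h) *\<^sub>R dF)
        + (1 / 2) * normPQ_block p Q (w - (2 * h) *\<^sub>R kron_apply L D w)"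
    using normPQ_block_triangle[OF p, of Q "(1 / 2) *\<^sub>R (w + (2 * h) *\<^sub>R dF)"
        "(1 / 2) *\<^sub>R (w - (2 * h) *\<^sub>R kron_apply L D w)"]
    by (simp add: normPQ_block_scaleR[OF p])
  also have "\<dots> \<le> (1 / 2) * ((1 + 2 * h * b) * normPQ_block p Q w) + (1 / 2) * normPQ_block p Q w"
    using normPQ_block_Ftilde_step_le[OF p Q _ _ quotient x y] normPQ_block_diffusion_step_le[OF p D Q L]
      assms(5-7)
    by (intro add_mono mult_left_mono) (auto simp: w_def dF_def mult.assoc)
  also have "\<dots> = (1 + h * b) * normPQ_block p Q w"
    by (simp add: algebra_simps)
  finally show ?thesis
    by (simp add: w_def dF_def)
qed

lemma eventually_at_right_0_scale:
  assumes "eventually P (at_right (0::real))" "0 < a"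
  shows "eventually (\<lambda>h. P (a * h)) (at_right 0)"
proof -
  obtain b where "0 < b" "\<And>h. 0 < h \<Longrightarrow> h < b \<Longrightarrow> P h"
    using assms(1) by (auto simp: eventually_at_right_field)
  then show ?thesis
    using assms(2) by (auto simp: eventually_at_right_field field_simps intro!: exI[of _ "b / a"])
qed

lemma eventually_at_right_0_mult_less: "0 < b \<Longrightarrow> eventually (\<lambda>h. h * a < b) (at_right (0::real))"
  using order_tendstoD(2)[OF tendsto_mult_right_zero[OF tendsto_ident_at[of 0 "{0<..}"]], of b a]
  by (simp add: mult.commute)

lemma has_vector_derivative_right_remainder:
  assumes "(f has_vector_derivative f') (at s within {0..})" "0 \<le> s" "0 < e"
  shows "eventually (\<lambda>h. norm (f (s + h) - f s - h *\<^sub>R f') \<le> e * h) (at_right 0)"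
proof -
  obtain d where "0 < d"
    and d: "\<And>t. t \<in> {0..} \<Longrightarrow> norm (t - s) < d \<Longrightarrow> norm (f t - f s - (t - s) *\<^sub>R f') \<le> e * norm (t - s)"
    using assms(1,3) unfolding has_vector_derivative_def has_derivative_within_alt by blast
  show ?thesis
    unfolding eventually_at_right_field
  proof (intro exI[of _ d] conjI allI impI)
    fix h :: real
    assume "0 < h" "h < d"
    then show "norm (f (s + h) - f s - h *\<^sub>R f') \<le> e * h"
      using d[of "s + h"] assms(2) by simp
  qed (rule \<open>0 < d\<close>)
qed

lemma right_Dini_le_imp_le:
  fixes f :: "real \<Rightarrow> real"
  assumes T: "0 \<le> T" and cont: "continuous_on {0..T} f"
    and Dini: "\<And>t e. 0 \<le> t \<Longrightarrow> t < T \<Longrightarrow> 0 < e \<Longrightarrow>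
      eventually (\<lambda>h. f (t + h) \<le> f t + h * e) (at_right 0)"
  shows "f T \<le> f 0"
proof (rule ccontr)
  assume "\<not> f T \<le> f 0"
  then have "0 < T"
    using T by (cases "T = 0") auto
  define e where "e = (f T - f 0) / (2 * T)"
  have e: "0 < e"
    using \<open>\<not> f T \<le> f 0\<close> \<open>0 < T\<close> by (simp add: e_def)
  define g where "g t = f t - f 0 - e * t" for t
  define S where "S = {0..T} \<inter> g -` {..0}"
  have "continuous_on {0..T} g"
    unfolding g_def by (intro continuous_intros cont)
  then have "closed S"
    unfolding S_def by (rule continuous_closed_preimage) auto
  moreover have "0 \<in> S" "bdd_above S"
    using T by (auto simp: S_def g_def intro: bdd_aboveI[of _ T])
  ultimately have "Sup S \<in> S"
    using closed_contains_Sup by blast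
  then have s: "0 \<le> Sup S" "Sup S \<le> T" "g (Sup S) \<le> 0"
    by (auto simp: S_def)
  moreover have "0 < g T"
    using \<open>0 < T\<close> \<open>\<not> f T \<le> f 0\<close> by (simp add: g_def e_def)
  ultimately have "Sup S < T"
    by (cases "Sup S = T") auto
  then have "0 < T - Sup S"
    by simp
  have "eventually (\<lambda>h. 0 < h \<and> h < T - Sup S \<and> f (Sup S + h) \<le> f (Sup S) + h * (e / 2)) (at_right 0)"
    using eventually_at_right_real[OF \<open>0 < T - Sup S\<close>] Dini[OF s(1) \<open>Sup S < T\<close> half_gt_zero[OF e]]
    by eventually_elim auto
  then obtain h where h: "0 < h" "h < T - Sup S" "f (Sup S + h) \<le> f (Sup S) + h * (e / 2)"
    using eventually_happens' trivial_limit_at_right_real by blast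
  then have "g (Sup S + h) < 0"
    using s(3) mult_pos_pos[OF e h(1)] by (simp add: g_def algebra_simps)
  then have "Sup S + h \<in> S"
    using h s by (simp add: S_def)
  then show False
    using cSup_upper[OF _ \<open>bdd_above S\<close>] h(1) by fastforce
qed

lemma right_differential_inequality_exp:
  fixes W :: "real \<Rightarrow> real"
  assumes T: "0 \<le> T" and cont: "continuous_on {0..T} W" and nonneg: "\<And>t. 0 \<le> t \<Longrightarrow> 0 \<le> W t"
    and growth: "\<And>t e. 0 \<le> t \<Longrightarrow> t < T \<Longrightarrow> 0 < e \<Longrightarrow>
      eventually (\<lambda>h. W (t + h) \<le> W t + h * (c * W t + e)) (at_right 0)"
  shows "W T \<le> exp (c * T) * W 0"
proof -
  define psi where "psi t = exp (- c * t) * W t" for t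
  have "psi T \<le> psi 0"
  proof (rule right_Dini_le_imp_le[OF T])
    show "continuous_on {0..T} psi"
      unfolding psi_def by (intro continuous_intros cont)
    fix t e :: real
    assume t: "0 \<le> t" "t < T" and "0 < e"
    define M where "M = exp (- c * t) * exp \<bar>c\<bar>"
    have "0 < M"
      by (simp add: M_def)
    have "eventually (\<lambda>h. 0 < h \<and> h < 1 \<and> W (t + h) \<le> W t + h * (c * W t + e / M)) (at_right 0)"
      using eventually_at_right_real[OF zero_less_one]
        growth[OF t divide_pos_pos[OF \<open>0 < e\<close> \<open>0 < M\<close>]]
      by eventually_elim auto
    then show "eventually (\<lambda>h. psi (t + h) \<le> psi t + h * e) (at_right 0)"
    proof eventually_elim
      case (elim h)
      then have W: "W (t + h) \<le> (1 + c * h) * W t + h * (e / M)"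
        by (simp add: algebra_simps)
      have decay: "exp (- c * h) * (1 + c * h) \<le> 1"
        using mult_left_mono[OF exp_ge_add_one_self[of "c * h"], of "exp (- c * h)"]
        by (simp add: exp_minus field_simps)
      have "- c * h \<le> \<bar>c\<bar> * h"
        using elim by (intro mult_right_mono) auto
      then have "exp (- c * h) \<le> exp \<bar>c\<bar>"
        using elim mult_left_le[of h "\<bar>c\<bar>"] by auto
      then have "exp (- c * h) * (h * (e / M)) \<le> exp \<bar>c\<bar> * (h * (e / M))"
        using elim \<open>0 < e\<close> \<open>0 < M\<close> by (intro mult_right_mono) auto
      moreover have "exp (- c * h) * W (t + h) \<le> exp (- c * h) * ((1 + c * h) * W t + h * (e / M))"
        using W by (intro mult_left_mono) auto
      ultimately have step: "exp (- c * h) * W (t + h) \<le> W t + exp \<bar>c\<bar> * (h * (e / M))"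
        using mult_right_mono[OF decay nonneg[OF t(1)]] by (simp add: algebra_simps)
      have "psi (t + h) = exp (- c * t) * (exp (- c * h) * W (t + h))"
        by (simp add: psi_def distrib_left exp_diff exp_minus field_simps)
      also have "\<dots> \<le> exp (- c * t) * (W t + exp \<bar>c\<bar> * (h * (e / M)))"
        using step by (rule mult_left_mono) simp
      also have "\<dots> = psi t + h * e"
        using \<open>0 < M\<close> by (simp add: psi_def M_def algebra_simps)
      finally show ?case .
    qed
  qed
  then show ?thesis
    by (simp add: psi_def exp_minus field_simps)
qed

lemma is_solutionD:
  assumes "is_solution F L D V u" "0 \<le> t"
  shows "u t $ k \<in> V"
    and "(u has_vector_derivative (Ftilde F (u t) - kron_apply L D (u t))) (at t within {0..})"
proof -
  obtain u' where "\<forall>t\<ge>0. \<forall>k. u t $ k \<in> V" "\<forall>t\<ge>0. (u has_vector_derivative u' t) (at t within {0..})"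
    "\<forall>t\<ge>0. u' t = Ftilde F (u t) - kron_apply L D (u t)"
    using assms(1) unfolding is_solution_def by blast
  then show "u t $ k \<in> V" "(u has_vector_derivative (Ftilde F (u t) - kron_apply L D (u t))) (at t within {0..})"
    using assms(2) by auto
qed

lemma solution_difference_right_growth:
  fixes u v :: "real \<Rightarrow> (real^'n)^'N"
  assumes p: "1 \<le> p" and D: "pos_diag D" and Q: "pos_diag Q" and L: "graph_laplacian L"
    and lip: "K-lipschitz_on V F" and "x0 \<in> V" "y0 \<in> V" "x0 \<noteq> y0"
    and u: "is_solution F L D V u" and v: "is_solution F L D V v" and "0 \<le> s" "0 < e"
  defines "W \<equiv> \<lambda>t. normPQ_block p Q (u t - v t)"
  shows "eventually (\<lambda>h. W (s + h) \<le> W s + h * (logLip p Q V F * W s + e)) (at_right 0)"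
proof -
  define c where "c = logLip p Q V F"
  have deriv: "((\<lambda>t. u t - v t) has_vector_derivative
      Ftilde F (u s) - Ftilde F (v s) - kron_apply L D (u s - v s)) (at s within {0..})"
    using has_vector_derivative_diff[OF is_solutionD(2)[OF u \<open>0 \<le> s\<close>] is_solutionD(2)[OF v \<open>0 \<le> s\<close>]]
    by (simp add: kron_apply_diff algebra_simps)
  define C where "C = CARD('N) * (\<Sum>i\<in>UNIV. Q $ i $ i)"
  have "0 \<le> C"
    using Q by (auto simp: C_def pos_diag_def less_imp_le intro!: mult_nonneg_nonneg sum_nonneg)
  define e1 where "e1 = e / (2 * (W s + 1))"
  have "0 \<le> W s"
    by (simp add: W_def)
  then have "0 < e1"
    using \<open>0 < e\<close> by (simp add: e1_def)
  have "e1 * W s = e / 2 * (W s / (W s + 1))"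
    using \<open>0 \<le> W s\<close> by (simp add: e1_def field_simps)
  also have "\<dots> \<le> e / 2"
    using \<open>0 \<le> W s\<close> \<open>0 < e\<close> by (intro mult_left_le) auto
  finally have "e1 * W s \<le> e / 2" .
  have "eventually (\<lambda>h. logLip_quotient p Q V F h < c + e1) (at_right 0)"
    using order_tendstoD(2)[OF logLip_quotient_tendsto[OF p Q lip assms(6-8)], of "c + e1"] \<open>0 < e1\<close>
    by (simp add: c_def)
  from eventually_at_right_0_scale[OF this, of 2]
  have "eventually (\<lambda>h. logLip_quotient p Q V F (2 * h) < c + e1) (at_right 0)"
    by simp
  moreover have "eventually (\<lambda>h. \<forall>i k. h * (2 * D $ i $ i * \<bar>L $ k $ k\<bar>) < 1) (at_right 0)"
    by (intro eventually_all_finite eventually_at_right_0_mult_less) simp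
  moreover have "eventually (\<lambda>h. h * (- 2 * (c + e1)) < 1) (at_right 0)"
    by (intro eventually_at_right_0_mult_less) simp
  moreover have "eventually (\<lambda>h. norm (u (s + h) - v (s + h) - (u s - v s)
      - h *\<^sub>R (Ftilde F (u s) - Ftilde F (v s) - kron_apply L D (u s - v s))) \<le> e / (2 * (C + 1)) * h)
      (at_right 0)"
    using \<open>0 < e\<close> \<open>0 \<le> C\<close> by (intro has_vector_derivative_right_remainder[OF deriv \<open>0 \<le> s\<close>]) simp
  ultimately show ?thesis
    using eventually_at_right_less[of 0]
  proof eventually_elim
    case (elim h)
    define R where "R = u (s + h) - v (s + h) - (u s - v s)
      - h *\<^sub>R (Ftilde F (u s) - Ftilde F (v s) - kron_apply L D (u s - v s))"
    have "normPQ_block p Q R \<le> C * (e / (2 * (C + 1)) * h)"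
      using normPQ_block_le_norm[OF p Q, of R] mult_left_mono[OF elim(4) \<open>0 \<le> C\<close>]
      by (simp add: C_def R_def)
    also have "\<dots> \<le> e / 2 * h"
      using \<open>0 \<le> C\<close> \<open>0 < e\<close> elim(5) by (simp add: field_simps)
    finally have rest: "normPQ_block p Q R \<le> e / 2 * h" .
    define X where "X = u s - v s + h *\<^sub>R (Ftilde F (u s) - Ftilde F (v s) - kron_apply L D (u s - v s))"
    have "u (s + h) - v (s + h) = X + R"
      by (simp add: X_def R_def)
    then have "W (s + h) \<le> normPQ_block p Q X + normPQ_block p Q R"
      using normPQ_block_triangle[OF p] by (simp add: W_def)
    moreover have "normPQ_block p Q X \<le> (1 + h * (c + e1)) * W s"
      unfolding W_def X_def
    proof (rule normPQ_block_euler_step_le[OF p D Q L elim(5) _ _ _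
        is_solutionD(1)[OF u \<open>0 \<le> s\<close>] is_solutionD(1)[OF v \<open>0 \<le> s\<close>]])
      show "0 \<le> 1 + 2 * h * (c + e1)"
        using elim(3) by (simp add: algebra_simps)
      show "2 * h * D $ i $ i * \<bar>L $ k $ k\<bar> \<le> 1" for i k
        using elim(2) by (auto simp: mult_ac less_imp_le)
      show "log_quotient p Q F (2 * h) x y \<le> c + e1" if "x \<in> V" "y \<in> V" "x \<noteq> y" for x y
        using log_quotient_le_logLip_quotient[OF p Q lip that, of "2 * h"] elim(1,5) by simp
    qed
    ultimately have "W (s + h) \<le> (1 + h * (c + e1)) * W s + e / 2 * h"
      using rest by linarith
    also have "\<dots> \<le> W s + h * (c * W s + e)"
    proof -
      have "h * (e1 * W s) \<le> h * (e / 2)"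
        using \<open>e1 * W s \<le> e / 2\<close> elim(5) by (intro mult_left_mono) auto
      then show ?thesis
        by (simp add: algebra_simps)
    qed
    finally show ?case
      by (simp add: c_def)
  qed
qed

lemma continuous_on_solution:
  assumes "is_solution F L D V u"
  shows "continuous_on {0..} u"
  using is_solutionD(2)[OF assms] by (intro continuous_on_vector_derivative) auto

text \<open>If \<open>V\<close> has at most
  one point, \<open>c\<close> is an unspecified value, but then \<open>u = v\<close>.\<close>
theorem theorem4:
  fixes V :: "(real^'n) set" and F :: "real^'n \<Rightarrow> real^'n"
    and D Q :: "real^'n^'n" and L :: "real^'N^'N" and p :: ereal
    and u v :: "real \<Rightarrow> (real^'n)^'N"
  assumes "convex V"
    and "\<exists>K. K-lipschitz_on V F"
    and "pos_diag D"
    and "graph_laplacian L"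
    and "1 \<le> p"
    and "pos_diag Q"
    and "c = logLip p Q V F"
    and "is_solution F L D V u"
    and "is_solution F L D V v"
    and "t \<ge> 0"
  shows "normPQ_block p Q (u t - v t) \<le> exp (c * t) * normPQ_block p Q (u 0 - v 0)"
proof (cases "\<exists>x\<in>V. \<exists>y\<in>V. x \<noteq> y")
  case False
  then have "u t = v t"
    using is_solutionD(1)[OF assms(8,10)] is_solutionD(1)[OF assms(9,10)] by (auto simp: vec_eq_iff)
  then show ?thesis
    using assms(5) by simp
next
  case True
  then obtain x0 y0 where "x0 \<in> V" "y0 \<in> V" "x0 \<noteq> y0"
    by blast
  obtain K where "K-lipschitz_on V F"
    using assms(2) by blast
  have "continuous_on {0..t} (\<lambda>s. u s - v s)"
    using continuous_on_solution[OF assms(8)] continuous_on_solution[OF assms(9)]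
    by (intro continuous_on_diff) (auto elim: continuous_on_subset)
  then have "continuous_on {0..t} (\<lambda>s. normPQ_block p Q (u s - v s))"
    by (rule continuous_on_compose2[OF continuous_on_normPQ_block[OF assms(5,6)]]) auto
  then show ?thesis
    using solution_difference_right_growth[OF assms(5,3,6,4) \<open>K-lipschitz_on V F\<close> \<open>x0 \<in> V\<close> \<open>y0 \<in> V\<close>
        \<open>x0 \<noteq> y0\<close> assms(8,9)] assms(7)
    by (intro right_differential_inequality_exp[OF assms(10)]) auto
qed

end
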